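(* Let $$c=s^8-(2-2i)s^7-(6+2i)s^6+(10+2i)s^5+4is^4+(10-2i)s^3+(6-2i)s^2-(2+2i)s-1,$$ $$d=s^6-(3+3i)s^5+3is^4+(4-4i)s^3+3s^2+(3+3i)s+i,$$ and $$y=-\frac{(1+i)(s^2-1)(s^2+2is+1)(s^2-2is+1)^2\,c}{4s(s^2+i)(s^2-i)^2(s^2+(1+i)s-i)\,d},\qquad t=\frac{(s^2-1)^2(s^4+6s^2+1)^3}{32s^2(s^4+1)^3}.$$ Then $y(t)$ is a solution of $\mathrm{P}_{\mathrm{VI}}$ with parameters $(\theta_1,\theta_2,\theta_3,\theta_4)=(1/2,1/2,1/2,3/4)$.
   Context: $\mathrm{P}_{\mathrm{VI}}$ is the equation $$\frac{d^2y}{dt^2}=\frac12\Big(\frac1y+\frac1{y-1}+\frac1{y-t}\Big)\Big(\frac{dy}{dt}\Big)^2-\Big(\frac1t+\frac1{t-1}+\frac1{y-t}\Big)\frac{dy}{dt}+\frac{y(y-1)(y-t)}{t^2(t-1)^2}\Big(\alpha+\beta\frac{t}{y^2}+\gamma\frac{t-1}{(y-1)^2}+\delta\frac{t(t-1)}{(y-t)^2}\Big),$$ with $\alpha=(\theta_4-1)^2/2$, $\beta=-\theta_1^2/2$, $\gamma=\theta_3^2/2$, $\delta=(1-\theta_2^2)/2$. When $y,t$ are given as rational functions of a parameter on a curve, derivatives with respect to $t$ are computed via the chain rule. Here $i=\sqrt{-1}$. *)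

theory Defs
  imports "HOL-Analysis.Analysis"
begin

definition pvi_alpha :: "complex \<Rightarrow> complex" where
  "pvi_alpha th4 = (th4 - 1) ^ 2 / 2"
definition pvi_beta :: "complex \<Rightarrow> complex" where
  "pvi_beta th1 = - (th1 ^ 2) / 2"
definition pvi_gamma :: "complex \<Rightarrow> complex" where
  "pvi_gamma th3 = th3 ^ 2 / 2"
definition pvi_delta :: "complex \<Rightarrow> complex" where
  "pvi_delta th2 = (1 - th2 ^ 2) / 2"

definition pvi_rhs ::
  "complex \<Rightarrow> complex \<Rightarrow> complex \<Rightarrow> complex \<Rightarrow> complex \<Rightarrow> complex \<Rightarrow> complex \<Rightarrow> complex" where
  "pvi_rhs th1 th2 th3 th4 t y y1 =
     (1/2)  *  (1/y + 1/(y - 1) + 1/(y - t))  *  y1 ^ 2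
     - (1/t + 1/(t - 1) + 1/(y - t))  *  y1
     + y  *  (y - 1)  *  (y - t) / (t ^ 2  *  (t - 1) ^ 2)  * 
       (pvi_alpha th4 + pvi_beta th1  *  t / y ^ 2 + pvi_gamma th3  *  (t - 1) / (y - 1) ^ 2
        + pvi_delta th2  *  t  *  (t - 1) / (y - t) ^ 2)"

text \<open>A parametrized curve s \<mapsto> (t(s), y(s)) gives a solution y(t) of P_VI
  if, at every parameter value s where t and y are holomorphic, t'(s) \<noteq> 0 and
  all terms of the equation are defined (y \<notin> {0,1,t}, t \<notin> {0,1}), the equation holds
  with d/dt computed via the chain rule d/dt = (1/t'(s)) d/ds.\<close>
definition pvi_param_solution ::
  "complex \<Rightarrow> complex \<Rightarrow> complex \<Rightarrow> complex \<Rightarrow> (complex \<Rightarrow> complex) \<Rightarrow> (complex \<Rightarrow> complex) \<Rightarrow> complex set \<Rightarrow> bool" where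
  "pvi_param_solution th1 th2 th3 th4 yf tf S \<longleftrightarrow>
     (\<forall>s \<in> S. deriv tf s \<noteq> 0 \<longrightarrow> yf s \<noteq> 0 \<longrightarrow> yf s \<noteq> 1 \<longrightarrow> yf s \<noteq> tf s \<longrightarrow>
        tf s \<noteq> 0 \<longrightarrow> tf s \<noteq> 1 \<longrightarrow>
        (let y1 = (\<lambda>u. deriv yf u / deriv tf u) in
         deriv y1 s / deriv tf s = pvi_rhs th1 th2 th3 th4 (tf s) (yf s) (y1 s)))"

definition cpoly :: "complex \<Rightarrow> complex" where
  "cpoly s = s ^ 8 - (2 - 2 * \<i>) * s ^ 7 - (6 + 2 * \<i>) * s ^ 6 + (10 + 2 * \<i>) * s ^ 5 + 4 * \<i> * s ^ 4
             + (10 - 2 * \<i>) * s ^ 3 + (6 - 2 * \<i>) * s ^ 2 - (2 + 2 * \<i>) * s - 1"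

definition dpoly :: "complex \<Rightarrow> complex" where
  "dpoly s = s ^ 6 - (3 + 3 * \<i>) * s ^ 5 + 3 * \<i> * s ^ 4 + (4 - 4 * \<i>) * s ^ 3 + 3 * s ^ 2 + (3 + 3 * \<i>) * s + \<i>"

definition yden :: "complex \<Rightarrow> complex" where
  "yden s = 4 * s * (s ^ 2 + \<i>) * (s ^ 2 - \<i>) ^ 2 * (s ^ 2 + (1 + \<i>) * s - \<i>) * dpoly s"

definition yfun :: "complex \<Rightarrow> complex" where
  "yfun s = - ((1 + \<i>) * (s ^ 2 - 1) * (s ^ 2 + 2 * \<i> * s + 1) * (s ^ 2 - 2 * \<i> * s + 1) ^ 2  *  cpoly s) / yden s"

definition tden :: "complex \<Rightarrow> complex" where
  "tden s = 32 * s ^ 2 * (s ^ 4 + 1) ^ 3"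

definition tfun :: "complex \<Rightarrow> complex" where
  "tfun s = (s ^ 2 - 1) ^ 2 * (s ^ 4 + 6 * s ^ 2 + 1) ^ 3 / tden s"

end

theory Submission
  imports Defs
begin

(* P_VI is the Hamiltonian system of Okamoto,
     t (t - 1) dq/dt =  dH/dp,   t (t - 1) dp/dt = - dH/dq,
   with H = q(q-1)(q-t) p^2 - (th1 (q-1)(q-t) + th3 q (q-t) + (th2 - 1) q (q-1)) p + kappa (q - t)
   and kappa = ((th1 + th2 + th3 - 1)^2 - (th4 - 1)^2) / 4: differentiating the first equation
   once more along the flow and eliminating p gives P_VI, for all parameters.  For the given curve
   the momentum p is an explicit rational function of s, and both Hamilton equations, written with
   d/ds = t'(s) d/dt, become rational identities in s.  These are checked after writing t, t - 1,
   y, y - 1, y - t, p and the s-derivatives of t, y, p as products of a few common factors, which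
   cancel, leaving polynomial identities of moderate degree between those factors. *)

lemma DERIV_divide_eqI:
  assumes "(f has_field_derivative f') (at x)" "(g has_field_derivative g') (at x)" "g x \<noteq> 0"
    and "f' * g x - f x * g' = h"
  shows "((\<lambda>x. f x / g x) has_field_derivative h / (g x)^2) (at x)"
  using DERIV_divide[OF assms(1-3)] assms(4) by (simp add: power2_eq_square)

definition pvi_ham_qdot ::
  "complex \<Rightarrow> complex \<Rightarrow> complex \<Rightarrow> complex \<Rightarrow> complex \<Rightarrow> complex \<Rightarrow> complex" where
  "pvi_ham_qdot th1 th2 th3 t q p =
     (2*q*(q-1)*(q-t)*p - (th1*(q-1)*(q-t) + th3*q*(q-t) + (th2-1)*q*(q-1))) / (t*(t-1))"

definition pvi_ham_pdot ::
  "complex \<Rightarrow> complex \<Rightarrow> complex \<Rightarrow> complex \<Rightarrow> complex \<Rightarrow> complex \<Rightarrow> complex \<Rightarrow> complex" where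
  "pvi_ham_pdot th1 th2 th3 th4 t q p =
     (- (q*(q-1) + q*(q-t) + (q-1)*(q-t)) * p^2
      + (th1*((q-1) + (q-t)) + th3*(q + (q-t)) + (th2-1)*(q + (q-1))) * p
      - ((th1 + th2 + th3 - 1)^2 - (th4 - 1)^2) / 4) / (t*(t-1))"

(* The left-hand side is (d/dt + F d/dq + G d/dp) F, the derivative of q' = F along the flow. *)
lemma pvi_rhs_along_hamiltonian_flow:
  fixes th1 th2 th3 th4 t q p :: complex
  assumes nz: "t \<noteq> 0" "t \<noteq> 1" "q \<noteq> 0" "q \<noteq> 1" "q \<noteq> t"
  defines "F \<equiv> pvi_ham_qdot th1 th2 th3 t q p"
    and "G \<equiv> pvi_ham_pdot th1 th2 th3 th4 t q p"
  shows "(- 2*q*(q-1)*p + (th1*(q-1) + th3*q)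
          + (2*(q*(q-1) + q*(q-t) + (q-1)*(q-t))*p
             - (th1*((q-1) + (q-t)) + th3*(q + (q-t)) + (th2-1)*(q + (q-1))))*F
          + 2*q*(q-1)*(q-t)*G - (2*t-1)*F) / (t*(t-1))
       = pvi_rhs th1 th2 th3 th4 t q F" (is "?lhs = _")
proof -
  define R where "R = q*(q-1)*(q-t)"
  define Rq where "Rq = q*(q-1) + q*(q-t) + (q-1)*(q-t)"
  define S where "S = th1*(q-1)*(q-t) + th3*q*(q-t) + (th2-1)*q*(q-1)"
  define Sq where "Sq = th1*((q-1) + (q-t)) + th3*(q + (q-t)) + (th2-1)*(q + (q-1))"
  define St where "St = - (th1*(q-1) + th3*q)"
  define K where "K = ((th1 + th2 + th3 - 1)^2 - (th4 - 1)^2) / 4"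
  define D where "D = t*(t-1)"
  have nz': "t - 1 \<noteq> 0" "q - 1 \<noteq> 0" "q - t \<noteq> 0" using nz by auto
  then have R: "R \<noteq> 0" and D: "D \<noteq> 0" using nz by (simp_all add: R_def D_def)
  have F_eq: "F = (2*R*p - S)/D" and G_eq: "G = (- Rq*p^2 + Sq*p - K)/D"
    unfolding F_def G_def pvi_ham_qdot_def pvi_ham_pdot_def R_def Rq_def S_def Sq_def K_def D_def
    by (simp_all add: mult.assoc)
  have p_eq: "p = (D*F + S)/(2*R)" using F_eq R D by (simp add: field_simps)
  have c2: "Rq/(2*R) = 1/2*(1/q + 1/(q-1) + 1/(q-t))"
    using nz nz' by (simp add: R_def Rq_def field_simps)
  have c1: "1/(q-t) + (2*t-1)/D = 1/t + 1/(t-1) + 1/(q-t)"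
    using nz nz' by (simp add: D_def field_simps)
  \<comment> \<open>The constant term is the only place where the choice of kappa matters.\<close>
  have c0: "(- S/(q-t) - St + (- Rq*S^2/(2*R) + Sq*S - 2*R*K)/D)/D
      = q*(q-1)*(q-t)/(t^2*(t-1)^2)*(pvi_alpha th4 + pvi_beta th1*t/q^2
          + pvi_gamma th3*(t-1)/(q-1)^2 + pvi_delta th2*t*(t-1)/(q-t)^2)"
  proof -
    have "- 2*D*q*(q-1)*S - 2*R*D*St - Rq*S^2 + 2*R*Sq*S - 4*R^2*K
        = 2*R^2*pvi_alpha th4 + 2*t*(q-1)^2*(q-t)^2*pvi_beta th1
          + 2*(t-1)*q^2*(q-t)^2*pvi_gamma th3 + 2*D*q^2*(q-1)^2*pvi_delta th2"
      unfolding R_def Rq_def S_def Sq_def St_def K_def D_def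
        pvi_alpha_def pvi_beta_def pvi_gamma_def pvi_delta_def by algebra
    then show ?thesis
      using nz nz' R D unfolding R_def D_def by (simp add: divide_simps) algebra
  qed
  have "?lhs = (- 2*R*p/(q-t) - St + (2*Rq*p - Sq)*F + 2*R*G - (2*t-1)*F) / D"
    using nz' by (simp add: R_def Rq_def Sq_def St_def D_def)
  also have "\<dots> = Rq/(2*R)*F^2 - (1/(q-t) + (2*t-1)/D)*F
        + (- S/(q-t) - St + (- Rq*S^2/(2*R) + Sq*S - 2*R*K)/D)/D"
    unfolding G_eq p_eq using R D nz' by (simp add: divide_simps) algebra
  also have "\<dots> = pvi_rhs th1 th2 th3 th4 t q F"
    unfolding pvi_rhs_def c2 c1 c0 ..
  finally show ?thesis .
qed

lemma has_field_derivative_pvi_ham_qdot: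
  fixes th1 th2 th3 th4 :: complex
  assumes t: "(tf has_field_derivative t') (at s)"
    and q: "(qf has_field_derivative t' * pvi_ham_qdot th1 th2 th3 (tf s) (qf s) (pf s)) (at s)"
    and p: "(pf has_field_derivative t' * pvi_ham_pdot th1 th2 th3 th4 (tf s) (qf s) (pf s)) (at s)"
    and nz: "tf s \<noteq> 0" "tf s \<noteq> 1" "qf s \<noteq> 0" "qf s \<noteq> 1" "qf s \<noteq> tf s"
  shows "((\<lambda>u. pvi_ham_qdot th1 th2 th3 (tf u) (qf u) (pf u)) has_field_derivative
           t' * pvi_rhs th1 th2 th3 th4 (tf s) (qf s) (pvi_ham_qdot th1 th2 th3 (tf s) (qf s) (pf s)))
         (at s)"
proof -
  have "tf s - 1 \<noteq> 0" using nz by simp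
  show ?thesis
    unfolding pvi_rhs_along_hamiltonian_flow[OF nz, symmetric]
    unfolding pvi_ham_qdot_def
    apply (rule derivative_eq_intros t q p refl)+
    using nz apply simp
    using nz \<open>tf s - 1 \<noteq> 0\<close> by (simp add: pvi_ham_qdot_def divide_simps) algebra
qed

(* t = (s^2-1)^2 (s^4+6s^2+1)^3 / (32 s^2 (s^4+1)^3) and
   t - 1 = (s^2+1)^2 (s^4-6s^2+1)^3 / (32 s^2 (s^4+1)^3); the quadratics below split these
   quartics: e_plus e_minus = s^4+6s^2+1, f_plus f_minus = s^4-6s^2+1 and
   sq_plus_i sq_minus_i = s^4+1. *)
definition sq_minus_one :: "complex \<Rightarrow> complex" where "sq_minus_one u = u^2 - 1"
definition sq_plus_one :: "complex \<Rightarrow> complex" where "sq_plus_one u = u^2 + 1"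
definition sq_plus_i :: "complex \<Rightarrow> complex" where "sq_plus_i u = u^2 + \<i>"
definition sq_minus_i :: "complex \<Rightarrow> complex" where "sq_minus_i u = u^2 - \<i>"
definition e_plus :: "complex \<Rightarrow> complex" where "e_plus u = u^2 + 2 * \<i> * u + 1"
definition e_minus :: "complex \<Rightarrow> complex" where "e_minus u = u^2 - 2 * \<i> * u + 1"
definition f_plus :: "complex \<Rightarrow> complex" where "f_plus u = u^2 + 2 * u - 1"
definition f_minus :: "complex \<Rightarrow> complex" where "f_minus u = u^2 - 2 * u - 1"
definition k_quad :: "complex \<Rightarrow> complex" where "k_quad u = u^2 + (1 + \<i>) * u - \<i>"

definition ym1_factor :: "complex \<Rightarrow> complex" where
  "ym1_factor u = (1 + \<i>) - 4 * \<i> * u + (4 + 8 * \<i>) * u^2 + (12 - 8 * \<i>) * u^3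
     + (-4 + 4 * \<i>) * u^4 + (-8 + 12 * \<i>) * u^5 + (-8 - 4 * \<i>) * u^6 - 4 * u^7 - (1 + \<i>) * u^8"

definition ymt_factor :: "complex \<Rightarrow> complex" where
  "ymt_factor u = -1 + (8 - 8 * \<i>) * u + 8 * \<i> * u^2 - (8 + 8 * \<i>) * u^3 + 2 * u^4
     + (8 - 8 * \<i>) * u^5 - 8 * \<i> * u^6 - (8 + 8 * \<i>) * u^7 - u^8"

definition pden :: "complex \<Rightarrow> complex" where
  "pden u = sq_minus_one u * e_plus u * e_minus u^2 * sq_plus_one u * f_minus u^2 * f_plus u"

(* The momentum is forced by the first Hamilton equation: p = (t (t-1) y'/t' + S) / (2 y (y-1) (y-t))
   with S = (y-1) (y-t)/2 + y (y-t)/2 - y (y-1)/2; this is its reduced form. *)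
definition pfun :: "complex \<Rightarrow> complex" where
  "pfun u = (\<i> - 1)/8 * yden u / pden u"

definition tfun_deriv :: "complex \<Rightarrow> complex" where
  "tfun_deriv u = 64 * u * sq_plus_i u^2 * sq_minus_i u^2 * sq_minus_one u * e_plus u^2 * e_minus u^2
     * sq_plus_one u * f_minus u^2 * f_plus u^2 / tden u^2"

(* The s-derivatives of y and p are written as combinations of the factors above, so that both
   Hamilton equations become identities in those factors alone. *)
definition yfun_deriv :: "complex \<Rightarrow> complex" where
  "yfun_deriv u = e_minus u * sq_minus_i u *
     (4 * cpoly u * f_minus u * ym1_factor u * ymt_factor u
      - 4 * sq_plus_one u * f_minus u^3 * f_plus u * ym1_factor u * ymt_factor u
      + (4 + 4 * \<i>) * sq_minus_one u * e_plus u * e_minus u^2 * cpoly u * f_minus u * ymt_factor u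
      - (32 + 32 * \<i>) * u * cpoly u * sq_plus_i u^2 * sq_minus_i u * f_minus u * ym1_factor u) / yden u^2"

definition pfun_deriv :: "complex \<Rightarrow> complex" where
  "pfun_deriv u = (\<i> - 1)/8 * e_minus u * sq_minus_i u *
     (- 16 * u * cpoly u * sq_plus_i u^2 * sq_minus_i u * f_minus u * ym1_factor u
      - 2 * sq_minus_one u * e_plus u * e_minus u^2 * cpoly u * f_minus u * ymt_factor u
      + (1 - \<i>) * sq_plus_one u * f_minus u^3 * f_plus u * ym1_factor u * ymt_factor u
      + 8 * sq_minus_one u * e_plus u * e_minus u^2 * sq_plus_one u * f_minus u^3 * f_plus u
          * ymt_factor u
      + (12 + 12 * \<i>) * u * sq_minus_one u * e_plus u * e_minus u^2 * sq_plus_i u^2 * sq_minus_i u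
          * sq_plus_one u * f_minus u^3 * f_plus u) / pden u^2"

lemma has_field_derivative_tfun:
  assumes "tden u \<noteq> 0"
  shows "(tfun has_field_derivative tfun_deriv u) (at u)"
  unfolding tfun_def[abs_def] tfun_deriv_def
  apply (rule DERIV_divide_eqI[where g = tden, OF _ _ assms])
    apply (unfold tden_def[abs_def])
    apply (rule derivative_eq_intros refl)+
  apply simp
  unfolding sq_plus_i_def sq_minus_i_def sq_minus_one_def e_plus_def e_minus_def sq_plus_one_def
    f_minus_def f_plus_def
  using power2_i by algebra

lemma has_field_derivative_yfun:
  assumes "yden u \<noteq> 0"
  shows "(yfun has_field_derivative yfun_deriv u) (at u)"
  unfolding yfun_def[abs_def] yfun_deriv_def
  apply (rule DERIV_divide_eqI[where g = yden, OF _ _ assms])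
    apply (unfold yden_def[abs_def] cpoly_def dpoly_def)
    apply (rule derivative_eq_intros refl)+
  apply simp
  unfolding sq_plus_i_def sq_minus_i_def sq_minus_one_def e_plus_def e_minus_def sq_plus_one_def
    f_minus_def f_plus_def ym1_factor_def ymt_factor_def
  using power2_i by algebra

lemma has_field_derivative_pfun:
  assumes "pden u \<noteq> 0"
  shows "(pfun has_field_derivative pfun_deriv u) (at u)"
  unfolding pfun_def[abs_def] pfun_deriv_def
  apply (rule DERIV_divide_eqI[where g = pden, OF _ _ assms])
    apply (unfold yden_def[abs_def] pden_def[abs_def] cpoly_def dpoly_def sq_plus_i_def sq_minus_i_def
      sq_minus_one_def e_plus_def e_minus_def sq_plus_one_def f_minus_def f_plus_def k_quad_def)
    apply (rule derivative_eq_intros refl)+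
  apply simp
  unfolding ym1_factor_def ymt_factor_def
  using power2_i by algebra

lemma tden_factored: "tden u = 32 * u^2 * sq_plus_i u^3 * sq_minus_i u^3"
  unfolding tden_def sq_plus_i_def sq_minus_i_def using power2_i by algebra

lemma yden_factored: "yden u = 4 * u * sq_plus_i u * sq_minus_i u^2 * k_quad u * dpoly u"
  unfolding yden_def sq_plus_i_def sq_minus_i_def k_quad_def ..

lemma curve_factors_nonzero:
  assumes "yden u \<noteq> 0" "pden u \<noteq> 0"
  shows "u \<noteq> 0" "sq_plus_i u \<noteq> 0" "sq_minus_i u \<noteq> 0" "k_quad u \<noteq> 0" "dpoly u \<noteq> 0"
    and "sq_minus_one u \<noteq> 0" "e_plus u \<noteq> 0" "e_minus u \<noteq> 0" "sq_plus_one u \<noteq> 0"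
    "f_minus u \<noteq> 0" "f_plus u \<noteq> 0"
  using assms by (simp_all add: yden_factored pden_def)

lemma tfun_factored: "tfun u = sq_minus_one u^2 * e_plus u^3 * e_minus u^3 / tden u"
proof -
  have "(u^2 - 1)^2 * (u^4 + 6 * u^2 + 1)^3 = sq_minus_one u^2 * e_plus u^3 * e_minus u^3"
    unfolding sq_minus_one_def e_plus_def e_minus_def using power2_i by algebra
  then show ?thesis by (simp add: tfun_def)
qed

lemma tfun_minus_one:
  assumes "tden u \<noteq> 0"
  shows "tfun u - 1 = sq_plus_one u^2 * f_minus u^3 * f_plus u^3 / tden u"
  unfolding tfun_def using assms apply (simp add: divide_simps)
  unfolding tden_def sq_plus_one_def f_minus_def f_plus_def by algebra

lemma yfun_factored:
  "yfun u = - ((1 + \<i>) * sq_minus_one u * e_plus u * e_minus u^2 * cpoly u) / yden u"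
  unfolding yfun_def sq_minus_one_def e_plus_def e_minus_def ..

lemma yfun_minus_one:
  assumes "yden u \<noteq> 0"
  shows "yfun u - 1 = sq_plus_one u * f_minus u^2 * f_plus u * ym1_factor u / yden u"
  unfolding yfun_def using assms apply (simp add: divide_simps)
  unfolding yden_def cpoly_def dpoly_def sq_plus_one_def f_minus_def f_plus_def ym1_factor_def
  using power2_i by algebra

lemma yfun_minus_tfun:
  assumes "yden u \<noteq> 0" "tden u \<noteq> 0"
  shows "yfun u - tfun u
    = 4 * u * sq_plus_i u * sq_minus_i u^2 * pden u * ymt_factor u / (yden u * tden u)"
  unfolding yfun_def tfun_def using assms apply (simp add: divide_simps)
  unfolding yden_def tden_def cpoly_def dpoly_def pden_def sq_minus_one_def sq_plus_one_def
    sq_plus_i_def sq_minus_i_def e_plus_def e_minus_def f_minus_def f_plus_def ymt_factor_def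
  using power2_i by algebra

lemma curve_q_equation:
  assumes "yden u \<noteq> 0" "tden u \<noteq> 0" "pden u \<noteq> 0"
  shows "yfun_deriv u = tfun_deriv u * pvi_ham_qdot (1/2) (1/2) (1/2) (tfun u) (yfun u) (pfun u)"
  unfolding pvi_ham_qdot_def
  apply (simp only: tfun_minus_one[OF assms(2)] yfun_minus_one[OF assms(1)]
      yfun_minus_tfun[OF assms(1,2)])
  apply (simp only: tfun_factored yfun_factored)
  unfolding yfun_deriv_def tfun_deriv_def pfun_def yden_factored tden_factored pden_def
  using curve_factors_nonzero[OF assms(1,3)] apply (simp add: divide_simps)
  using power2_i by algebra

lemma curve_p_equation:
  assumes "yden u \<noteq> 0" "tden u \<noteq> 0" "pden u \<noteq> 0"
  shows "pfun_deriv u = tfun_deriv u * pvi_ham_pdot (1/2) (1/2) (1/2) (3/4) (tfun u) (yfun u) (pfun u)"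
  unfolding pvi_ham_pdot_def
  apply (simp only: tfun_minus_one[OF assms(2)] yfun_minus_one[OF assms(1)]
      yfun_minus_tfun[OF assms(1,2)])
  apply (simp only: tfun_factored yfun_factored)
  unfolding pfun_deriv_def tfun_deriv_def pfun_def yden_factored tden_factored pden_def
  using curve_factors_nonzero[OF assms(1,3)] apply (simp add: divide_simps)
  using power2_i by algebra

definition curve_domain :: "complex set" where
  "curve_domain = {u. yden u \<noteq> 0 \<and> tden u \<noteq> 0 \<and> pden u \<noteq> 0}"

lemma open_curve_domain: "open curve_domain"
  unfolding curve_domain_def by (intro open_Collect_conj open_Collect_neq)
    (auto simp: yden_def dpoly_def tden_def pden_def sq_minus_one_def e_plus_def e_minus_def
      sq_plus_one_def f_minus_def f_plus_def intro!: continuous_intros)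

lemma pden_nonzero:
  assumes "tden u \<noteq> 0" "tfun u \<noteq> 0" "tfun u \<noteq> 1"
  shows "pden u \<noteq> 0"
proof -
  have "tfun u - 1 \<noteq> 0" using assms(3) by simp
  then show ?thesis
    using assms(2) tfun_factored[of u] tfun_minus_one[OF assms(1)] by (auto simp: pden_def)
qed

lemma curve_hamiltonian_system:
  assumes "u \<in> curve_domain"
  shows "(tfun has_field_derivative tfun_deriv u) (at u)"
    and "(yfun has_field_derivative
           tfun_deriv u * pvi_ham_qdot (1/2) (1/2) (1/2) (tfun u) (yfun u) (pfun u)) (at u)"
    and "(pfun has_field_derivative
           tfun_deriv u * pvi_ham_pdot (1/2) (1/2) (1/2) (3/4) (tfun u) (yfun u) (pfun u)) (at u)"
    and "tfun_deriv u \<noteq> 0"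
proof -
  have u: "yden u \<noteq> 0" "tden u \<noteq> 0" "pden u \<noteq> 0" using assms by (simp_all add: curve_domain_def)
  show "(tfun has_field_derivative tfun_deriv u) (at u)"
    by (rule has_field_derivative_tfun[OF u(2)])
  show "(yfun has_field_derivative
           tfun_deriv u * pvi_ham_qdot (1/2) (1/2) (1/2) (tfun u) (yfun u) (pfun u)) (at u)"
    using has_field_derivative_yfun[OF u(1)] by (simp only: curve_q_equation[OF u])
  show "(pfun has_field_derivative
           tfun_deriv u * pvi_ham_pdot (1/2) (1/2) (1/2) (3/4) (tfun u) (yfun u) (pfun u)) (at u)"
    using has_field_derivative_pfun[OF u(3)] by (simp only: curve_p_equation[OF u])
  show "tfun_deriv u \<noteq> 0"
    using curve_factors_nonzero[OF u(1,3)] u(2) by (simp add: tfun_deriv_def)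
qed

theorem mainTheorem12:
  shows "pvi_param_solution (1/2) (1/2) (1/2) (3/4) yfun tfun
           {s. yden s \<noteq> 0 \<and> tden s \<noteq> 0}"
  unfolding pvi_param_solution_def Let_def
proof (intro ballI impI)
  fix s
  assume "s \<in> {s. yden s \<noteq> 0 \<and> tden s \<noteq> 0}" and "deriv tfun s \<noteq> 0"
    and y: "yfun s \<noteq> 0" "yfun s \<noteq> 1" "yfun s \<noteq> tfun s" and t: "tfun s \<noteq> 0" "tfun s \<noteq> 1"
  then have s: "s \<in> curve_domain" using pden_nonzero by (simp add: curve_domain_def)
  note hs = curve_hamiltonian_system[OF s]
  have velocity: "pvi_ham_qdot (1/2) (1/2) (1/2) (tfun u) (yfun u) (pfun u)
      = deriv yfun u / deriv tfun u" if "u \<in> curve_domain" for u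
    using curve_hamiltonian_system[OF that] by (simp add: DERIV_imp_deriv)
  have "((\<lambda>u. deriv yfun u / deriv tfun u) has_field_derivative
      tfun_deriv s * pvi_rhs (1/2) (1/2) (1/2) (3/4) (tfun s) (yfun s)
        (pvi_ham_qdot (1/2) (1/2) (1/2) (tfun s) (yfun s) (pfun s))) (at s)"
    by (rule has_field_derivative_transform_within_open[OF
          has_field_derivative_pvi_ham_qdot[OF hs(1-3) t y] open_curve_domain s velocity])
  then show "deriv (\<lambda>u. deriv yfun u / deriv tfun u) s / deriv tfun s
      = pvi_rhs (1/2) (1/2) (1/2) (3/4) (tfun s) (yfun s) (deriv yfun s / deriv tfun s)"
    using hs(1,4) velocity[OF s] by (simp add: DERIV_imp_deriv)
qed

end
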